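(* Let $A\in\mathcal{PM}(n)$ have row vectors $r_0,\ldots,r_{n-1}$. A row vector $v\in\{0,1\}^n$ is a poset vector of $A$ if and only if $v=\sum_{i\in S} r_i$ (Boolean sum) for some $S\subseteq X_n$ with $|S|=k\ge 0$ such that the principal submatrix $A[S]$ equals the $k\times k$ identity matrix $I_k$, where the empty sum ($k=0$) is $v=\mathbf{0}$.
   Context: Let $X_n=\{0,1,\ldots,n-1\}$. A naturally labeled (NL) poset on $X_n$ is a partial order $\preceq$ on $X_n$ such that $x\preceq y$ implies $x\le y$ in the usual integer order. Its poset matrix is the $n\times n$ $(0,1)$-matrix $A=(a_{i,j})_{i,j\in X_n}$ with $a_{i,j}=1$ if $j\preceq i$ and $0$ otherwise; $\mathcal{PM}(n)$ is the set of all such matrices. Vectors are over the Boolean algebra $\{0,1\}$ with $0+0=0$, $0+1=1+0=1+1=1$ (entrywise sum). For $v\in\{0,1\}^n$ (a row vector), $A^v=\begin{bmatrix}A&\mathbf{0}\\ v&1\end{bmatrix}$, and $v$ is a poset vector of $A$ if $A^v\in\mathcal{PM}(n+1)$. For $S\subseteq X_n$, $A[S]$ is the principal submatrix of $A$ with rows and columns indexed by $S$. *)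

theory Defs
  imports Main
begin

text \<open>An n x n (0,1)-matrix indexed by X_n = {0..<n} is modelled as a function
  nat => nat => bool (True = 1, False = 0); only entries with indices < n matter.
  A row vector in {0,1}^n is a function nat => bool, only entries < n matter.\<close>

type_synonym bmat = "nat \<Rightarrow> nat \<Rightarrow> bool"
type_synonym bvec = "nat \<Rightarrow> bool"

text \<open>Poset matrix: a_{i,j} = 1 iff j precedes i, for a naturally labeled partial order on X_n.\<close>
definition poset_matrix :: "nat \<Rightarrow> bmat \<Rightarrow> bool" where
  "poset_matrix n A \<longleftrightarrow>
     (\<forall>i<n. A i i) \<and>
     (\<forall>i<n. \<forall>j<n. A i j \<and> A j i \<longrightarrow> i = j) \<and>
     (\<forall>i<n. \<forall>j<n. \<forall>k<n. A i j \<and> A j k \<longrightarrow> A i k) \<and>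
     (\<forall>i<n. \<forall>j<n. A i j \<longrightarrow> j \<le> i)"

text \<open>A^v = [[A, 0], [v, 1]] as an (n+1) x (n+1) matrix.\<close>
definition ext_mat :: "nat \<Rightarrow> bmat \<Rightarrow> bvec \<Rightarrow> bmat" where
  "ext_mat n A v = (\<lambda>i j. if i < n \<and> j < n then A i j
                          else if i = n \<and> j < n then v j
                          else i = n \<and> j = n)"

definition poset_vector :: "nat \<Rightarrow> bmat \<Rightarrow> bvec \<Rightarrow> bool" where
  "poset_vector n A v \<longleftrightarrow> poset_matrix (Suc n) (ext_mat n A v)"

definition row_sum :: "bmat \<Rightarrow> nat set \<Rightarrow> bvec" where
  "row_sum A S = (\<lambda>j. \<exists>i\<in>S. A i j)"

definition principal_identity :: "bmat \<Rightarrow> nat set \<Rightarrow> bool" where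
  "principal_identity A S \<longleftrightarrow> (\<forall>i\<in>S. \<forall>j\<in>S. A i j = (i = j))"

end

theory Submission
  imports Defs
begin

text \<open>Row i of a poset matrix is the indicator of the principal down-set of i, so a Boolean
  sum of rows is the indicator of a down-set, and appending v to A gives a poset matrix exactly
  when v is the indicator of a down-set. Conversely every down-set is the union of the principal
  down-sets of its maximal elements; these form an antichain, which is what A[S] = I says.\<close>

lemma poset_matrix_refl: "poset_matrix n A \<Longrightarrow> i < n \<Longrightarrow> A i i"
  by (simp add: poset_matrix_def)

lemma poset_matrix_antisym:
  "poset_matrix n A \<Longrightarrow> i < n \<Longrightarrow> j < n \<Longrightarrow> A i j \<Longrightarrow> A j i \<Longrightarrow> i = j"
  unfolding poset_matrix_def by blast

lemma poset_matrix_trans: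
  "poset_matrix n A \<Longrightarrow> i < n \<Longrightarrow> j < n \<Longrightarrow> k < n \<Longrightarrow> A i j \<Longrightarrow> A j k \<Longrightarrow> A i k"
  unfolding poset_matrix_def by blast

lemma poset_matrix_naturally_labeled:
  "poset_matrix n A \<Longrightarrow> i < n \<Longrightarrow> j < n \<Longrightarrow> A i j \<Longrightarrow> j \<le> i"
  unfolding poset_matrix_def by blast

lemma poset_matrix_mono: "poset_matrix m A \<Longrightarrow> n \<le> m \<Longrightarrow> poset_matrix n A"
  unfolding poset_matrix_def by (meson less_le_trans)

lemma poset_matrix_cong:
  "(\<And>i j. i < n \<Longrightarrow> j < n \<Longrightarrow> A i j = B i j) \<Longrightarrow> poset_matrix n A = poset_matrix n B"
  by (simp add: poset_matrix_def)

definition down_closed :: "nat \<Rightarrow> bmat \<Rightarrow> bvec \<Rightarrow> bool" where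
  "down_closed n A v \<longleftrightarrow> (\<forall>j<n. \<forall>k<n. v j \<and> A j k \<longrightarrow> v k)"

lemma down_closed_cong:
  "(\<And>j. j < n \<Longrightarrow> v j = w j) \<Longrightarrow> down_closed n A v = down_closed n A w"
  by (simp add: down_closed_def)

lemma down_closedD: "down_closed n A v \<Longrightarrow> j < n \<Longrightarrow> k < n \<Longrightarrow> v j \<Longrightarrow> A j k \<Longrightarrow> v k"
  unfolding down_closed_def by blast

lemma ext_mat_simps:
  "i < n \<Longrightarrow> j < n \<Longrightarrow> ext_mat n A v i j = A i j"
  "j < n \<Longrightarrow> ext_mat n A v n j = v j"
  "i < n \<Longrightarrow> ext_mat n A v i n = False"
  "ext_mat n A v n n = True"
  by (simp_all add: ext_mat_def)

lemma down_closed_if_poset_matrix_ext_mat: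
  assumes ext: "poset_matrix (Suc n) (ext_mat n A v)"
  shows "down_closed n A v"
  unfolding down_closed_def
proof (intro allI impI)
  fix j k assume "j < n" "k < n" "v j \<and> A j k"
  then have "ext_mat n A v n j" "ext_mat n A v j k" by (simp_all add: ext_mat_simps)
  then have "ext_mat n A v n k"
    using ext \<open>j < n\<close> \<open>k < n\<close> by (meson poset_matrix_trans lessI less_SucI)
  then show "v k" using \<open>k < n\<close> by (simp add: ext_mat_simps)
qed

lemma poset_matrix_ext_mat:
  assumes A: "poset_matrix n A" and v: "down_closed n A v"
  shows "poset_matrix (Suc n) (ext_mat n A v)"
  unfolding poset_matrix_def
proof (intro conjI allI impI)
  fix i assume "i < Suc n"
  then show "ext_mat n A v i i"
    using A by (auto simp: less_Suc_eq ext_mat_simps intro: poset_matrix_refl)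
next
  fix i j assume "i < Suc n" "j < Suc n" "ext_mat n A v i j \<and> ext_mat n A v j i"
  then show "i = j"
    using A by (auto simp: less_Suc_eq ext_mat_simps intro: poset_matrix_antisym)
next
  fix i j k assume "i < Suc n" "j < Suc n" "k < Suc n" "ext_mat n A v i j \<and> ext_mat n A v j k"
  then show "ext_mat n A v i k"
    using A v by (auto simp: less_Suc_eq ext_mat_simps intro: poset_matrix_trans down_closedD)
next
  fix i j assume "i < Suc n" "j < Suc n" "ext_mat n A v i j"
  then show "j \<le> i"
    using A by (auto simp: less_Suc_eq ext_mat_simps intro: poset_matrix_naturally_labeled)
qed

lemma poset_matrix_ext_mat_iff:
  "poset_matrix (Suc n) (ext_mat n A v) \<longleftrightarrow> poset_matrix n A \<and> down_closed n A v"
proof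
  assume ext: "poset_matrix (Suc n) (ext_mat n A v)"
  have "poset_matrix n (ext_mat n A v)"
    using ext by (rule poset_matrix_mono) simp
  then have "poset_matrix n A"
    using poset_matrix_cong[of n "ext_mat n A v" A] by (simp add: ext_mat_simps)
  with down_closed_if_poset_matrix_ext_mat[OF ext] show "poset_matrix n A \<and> down_closed n A v"
    by blast
next
  assume "poset_matrix n A \<and> down_closed n A v"
  then show "poset_matrix (Suc n) (ext_mat n A v)"
    by (blast intro: poset_matrix_ext_mat)
qed

corollary poset_vector_iff_down_closed:
  "poset_matrix n A \<Longrightarrow> poset_vector n A v \<longleftrightarrow> down_closed n A v"
  by (simp add: poset_vector_def poset_matrix_ext_mat_iff)

lemma down_closed_row_sum:
  assumes A: "poset_matrix n A" and S: "S \<subseteq> {..<n}"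
  shows "down_closed n A (row_sum A S)"
  unfolding down_closed_def
proof (intro allI impI)
  fix j k assume "j < n" "k < n" "row_sum A S j \<and> A j k"
  then obtain i where "i \<in> S" "A i j" "A j k" by (auto simp: row_sum_def)
  with A S \<open>j < n\<close> \<open>k < n\<close> have "A i k" by (meson poset_matrix_trans lessThan_iff subsetD)
  with \<open>i \<in> S\<close> show "row_sum A S k" by (auto simp: row_sum_def)
qed

definition maximals :: "nat \<Rightarrow> bmat \<Rightarrow> bvec \<Rightarrow> nat set" where
  "maximals n A v = {i. i < n \<and> v i \<and> (\<forall>j<n. v j \<and> A j i \<longrightarrow> j = i)}"

lemma principal_identity_maximals:
  assumes "poset_matrix n A"
  shows "principal_identity A (maximals n A v)"
  using assms unfolding principal_identity_def maximals_def by (blast intro: poset_matrix_refl)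

text \<open>The largest label above j is maximal, because the labelling is natural.\<close>
lemma exists_maximal_above:
  assumes A: "poset_matrix n A" and j: "j < n" "v j"
  shows "\<exists>m \<in> maximals n A v. A m j"
proof -
  define T where "T = {i. i < n \<and> v i \<and> A i j}"
  define m where "m = Max T"
  have "finite T" by (simp add: T_def)
  moreover have "j \<in> T"
    using A j by (simp add: T_def poset_matrix_refl)
  ultimately have m: "m \<in> T" and m_max: "\<And>i. i \<in> T \<Longrightarrow> i \<le> m"
    by (auto simp: m_def intro: Max_in)
  have "m \<in> maximals n A v"
    unfolding maximals_def
  proof (intro CollectI conjI allI impI)
    show "m < n" "v m" using m by (simp_all add: T_def)
    fix i assume "i < n" "v i \<and> A i m"
    then have "i \<in> T"
      using A m \<open>j < n\<close> unfolding T_def by (blast intro: poset_matrix_trans)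
    then have "i \<le> m" by (rule m_max)
    moreover have "m \<le> i"
      using A \<open>i < n\<close> \<open>m < n\<close> \<open>v i \<and> A i m\<close> by (blast intro: poset_matrix_naturally_labeled)
    ultimately show "i = m" by (rule antisym)
  qed
  with m show ?thesis by (auto simp: T_def)
qed

lemma down_closed_eq_row_sum_maximals:
  assumes "poset_matrix n A" and "down_closed n A v" and "j < n"
  shows "v j = row_sum A (maximals n A v) j"
  using assms exists_maximal_above[OF assms(1,3)]
  unfolding row_sum_def maximals_def by (blast intro: down_closedD)

theorem theorem2p2:
  fixes n :: nat and A :: bmat and v :: bvec
  assumes "poset_matrix n A"
  shows "poset_vector n A v \<longleftrightarrow>
    (\<exists>S. S \<subseteq> {..<n} \<and> principal_identity A S \<and> (\<forall>j<n. v j = row_sum A S j))"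
proof
  assume "poset_vector n A v"
  then have "down_closed n A v"
    using poset_vector_iff_down_closed[OF assms] by blast
  show "\<exists>S. S \<subseteq> {..<n} \<and> principal_identity A S \<and> (\<forall>j<n. v j = row_sum A S j)"
  proof (intro exI conjI allI impI)
    show "maximals n A v \<subseteq> {..<n}" by (auto simp: maximals_def)
    show "principal_identity A (maximals n A v)" using assms by (rule principal_identity_maximals)
    show "v j = row_sum A (maximals n A v) j" if "j < n" for j
      using assms \<open>down_closed n A v\<close> that by (rule down_closed_eq_row_sum_maximals)
  qed
next
  assume "\<exists>S. S \<subseteq> {..<n} \<and> principal_identity A S \<and> (\<forall>j<n. v j = row_sum A S j)"
  then obtain S where S: "S \<subseteq> {..<n}" and v: "\<forall>j<n. v j = row_sum A S j" by blast
  have "down_closed n A (row_sum A S)"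
    using assms S by (rule down_closed_row_sum)
  then have "down_closed n A v"
    using down_closed_cong[of n v "row_sum A S" A] v by blast
  then show "poset_vector n A v"
    using poset_vector_iff_down_closed[OF assms] by blast
qed

end
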